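(* Let $A$ be a $d\times n$ matrix with integer entries and $\ker(A)\cap\mathbb R^{n}_{\ge0}=\{\mathbf 0\}$. Let $\mathbf c$ be a column of $A$, let $\mathbf c'\in\mathbb Z^{d}$, and let $A'$ be the matrix obtained from $A$ by replacing the column $\mathbf c$ with $\mathbf c'$. If $p_{A'}(\mathbf c)\ge p_A(\mathbf c)$, then $p_{A'}(\mathbf b)\ge p_A(\mathbf b)$ for all $\mathbf b\in\mathbb Z^d_{\ge0}$.
   Context: For an integer matrix $M$ with $r$ columns and $\mathbf b$ a vector, $p_M(\mathbf b)=\#\{\mathbf x\in\mathbb Z^r_{\ge0}:M\mathbf x=\mathbf b\}$ (the vector partition function; counted as a cardinality). *)

theory Defs
  imports "HOL-Analysis.Analysis" "HOL-Library.Extended_Nat"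
begin

definition vpf :: "int^'n^'d \<Rightarrow> int^'d \<Rightarrow> enat" where
  "vpf M b = (let S = {x :: nat^'n. M *v (\<chi> i. int (x $ i)) = b}
              in if finite S then enat (card S) else \<infinity>)"

definition replace_col :: "int^'n^'d \<Rightarrow> 'n \<Rightarrow> int^'d \<Rightarrow> int^'n^'d" where
  "replace_col M j c' = (\<chi> i k. if k = j then c' $ i else M $ i $ k)"

end

theory Submission
  imports Defs
begin

text \<open>
  The kernel condition makes every p_A(b) finite: by Dickson's lemma an infinite set of
  solutions contains two solutions x < y, and then y - x is a nonzero nonnegative kernel vector.
  The solutions of A'x = c with x_j = 0 are those of Ax = c with x_j = 0, while Ax = c has the
  further solution e_j; so p_A'(c) \<ge> p_A(c) forces a solution x0 of A'x0 = c with x0_j > 0.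
  Trading, in a solution x of Ax = b, the x_j copies of the column c for x_j copies of x0 gives a
  solution y of A'y = b, and this map is injective because y_j = x_j x0_j.
\<close>

lemma incseq_subseq_nat:
  fixes s :: "nat \<Rightarrow> nat"
  obtains r where "strict_mono r" "incseq (s \<circ> r)"
proof -
  obtain g where g: "strict_mono g" "monoseq (s \<circ> g)"
    using seq_monosub by (auto simp: o_def)
  show thesis
  proof (cases "incseq (s \<circ> g)")
    case True
    with g(1) show thesis by (rule that)
  next
    case False
    with g have dec: "decseq (s \<circ> g)" by (simp add: monoseq_iff)
    obtain m where m: "\<And>n. s (g m) \<le> s (g n)"
      using ex_has_least_nat[of "\<lambda>_. True" 0 "s \<circ> g"] by auto
    have const: "s (g (n + m)) = s (g m)" for n
      using dec m[of "n + m"] by (auto simp: decseq_def intro: order.antisym)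
    show thesis
    proof (rule that)
      show "strict_mono (g \<circ> (\<lambda>n. n + m))"
        using g(1) by (simp add: strict_mono_def)
      show "incseq (s \<circ> (g \<circ> (\<lambda>n. n + m)))"
        by (simp add: incseq_def const)
    qed
  qed
qed

lemma coordinatewise_incseq_subseq:
  fixes f :: "nat \<Rightarrow> nat^'n"
  assumes "finite I"
  shows "\<exists>r. strict_mono r \<and> (\<forall>k\<in>I. incseq (\<lambda>n. f (r n) $ k))"
  using assms
proof (induction I rule: finite_induct)
  case empty
  show ?case using strict_mono_id by blast
next
  case (insert a I)
  then obtain r where r: "strict_mono r" "\<forall>k\<in>I. incseq (\<lambda>n. f (r n) $ k)"
    by blast
  obtain r' where r': "strict_mono r'" "incseq ((\<lambda>n. f (r n) $ a) \<circ> r')"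
    by (rule incseq_subseq_nat)
  have "strict_mono (r \<circ> r')"
    using r(1) r'(1) by (simp add: strict_mono_def)
  moreover have "incseq (\<lambda>n. f ((r \<circ> r') n) $ k)" if "k \<in> I" for k
    using r(2) that strict_mono_less_eq[OF r'(1)] by (simp add: incseq_def)
  ultimately show ?case
    using r'(2) by (auto simp: o_def)
qed

lemma dickson_nat_vec:
  assumes "infinite (S :: (nat^'n) set)"
  shows "\<exists>x\<in>S. \<exists>y\<in>S. x < y"
proof -
  obtain f :: "nat \<Rightarrow> nat^'n" where f: "inj f" "range f \<subseteq> S"
    using assms infinite_countable_subset by blast
  obtain r where r: "strict_mono r" "\<And>k. incseq (\<lambda>n. f (r n) $ k)"
    using coordinatewise_incseq_subseq[of UNIV f] by auto
  have "f (r 0) \<le> f (r 1)"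
    using r(2) by (simp add: less_eq_vec_def incseq_def)
  moreover have "f (r 0) \<noteq> f (r 1)"
    using f(1) strict_mono_eq[OF r(1), of 0 1] by (auto dest: injD)
  moreover have "f (r 0) \<in> S" "f (r 1) \<in> S"
    using f(2) by auto
  ultimately show ?thesis
    unfolding order.strict_iff_order by blast
qed

definition int_vec :: "nat^'n \<Rightarrow> int^'n" where
  "int_vec x = (\<chi> i. int (x $ i))"

lemma int_vec_nth [simp]: "int_vec x $ i = int (x $ i)"
  by (simp add: int_vec_def)

lemma int_vec_add: "int_vec (x + y) = int_vec x + int_vec y"
  by (simp add: vec_eq_iff)

lemma int_vec_scalar_mult: "int_vec (c *s x) = int c *s int_vec x"
  by (simp add: vec_eq_iff vector_scalar_mult_def)

definition solutions :: "int^'n^'d \<Rightarrow> int^'d \<Rightarrow> (nat^'n) set" where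
  "solutions M b = {x. M *v int_vec x = b}"

lemma vpf_solutions:
  "vpf M b = (if finite (solutions M b) then enat (card (solutions M b)) else \<infinity>)"
  by (simp add: vpf_def solutions_def int_vec_def Let_def)

lemma vpf_le_by_injection:
  assumes "finite (solutions M b)" "inj_on f (solutions M b)"
    and "f ` solutions M b \<subseteq> solutions M' b'"
  shows "vpf M b \<le> vpf M' b'"
  using card_inj_on_le[OF assms(2,3)] assms(1) by (simp add: vpf_solutions)

lemma map_matrix_of_int_mult_vec:
  "map_matrix (of_int :: int \<Rightarrow> 'a::ring_1) A *v (\<chi> k. of_int (v $ k))
     = (\<chi> i. of_int ((A *v v) $ i))"
  by (simp add: matrix_vector_mult_def vec_eq_iff)

lemma finite_solutions:
  fixes A :: "int^'n^'d"
  assumes ker: "\<forall>x :: real^'n. (\<forall>k. x $ k \<ge> 0) \<and> (map_matrix real_of_int A) *v x = 0 \<longrightarrow> x = 0"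
  shows "finite (solutions A b)"
proof (rule ccontr)
  assume "infinite (solutions A b)"
  then obtain x y where sol: "x \<in> solutions A b" "y \<in> solutions A b" and "x < y"
    using dickson_nat_vec by blast
  then have le: "x \<le> y" and ne: "x \<noteq> y" by auto
  define z :: "real^'n" where "z = (\<chi> k. of_int ((int_vec y - int_vec x) $ k))"
  have "A *v (int_vec y - int_vec x) = 0"
    using sol by (simp add: solutions_def matrix_vector_mult_diff_distrib)
  then have "map_matrix real_of_int A *v z = 0"
    unfolding z_def map_matrix_of_int_mult_vec by (simp add: vec_eq_iff)
  moreover have "\<forall>k. z $ k \<ge> 0"
    using le by (simp add: z_def less_eq_vec_def)
  ultimately have "z = 0" using ker by blast
  then have "x = y" by (simp add: z_def vec_eq_iff)
  with ne show False ..
qed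

lemma matrix_vector_mult_split_column:
  fixes M :: "'a::comm_ring_1^'n^'m"
  shows "M *v y = M *v (\<chi> k. if k = j then 0 else y $ k) + y $ j *s column j M"
  by (simp add: matrix_vector_mult_def vec_eq_iff column_def vector_scalar_mult_def if_distrib
      sum.If_cases Compl_eq_Diff_UNIV sum.remove[of UNIV j] mult.commute)

lemma matrix_vector_mult_scalar_commute:
  fixes M :: "'a::comm_semiring_1^'n^'m"
  shows "M *v (c *s y) = c *s (M *v y)"
  by (simp add: vector_scalar_mult_def matrix_vector_mult_def mult_ac sum_distrib_left)

lemma matrix_vector_mult_replace_col:
  "y $ j = 0 \<Longrightarrow> replace_col M j c' *v y = M *v y"
  unfolding matrix_vector_mult_def replace_col_def
  by (auto simp: vec_eq_iff intro!: sum.cong)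

lemma column_replace_col [simp]: "column j (replace_col M j c') = c'"
  by (simp add: column_def replace_col_def)

lemma ex_solution_using_replaced_column:
  fixes A :: "int^'n^'d"
  assumes fin: "finite (solutions A (column j A))"
    and le: "vpf A (column j A) \<le> vpf (replace_col A j c') (column j A)"
  shows "\<exists>x0 \<in> solutions (replace_col A j c') (column j A). x0 $ j \<noteq> 0"
proof (rule ccontr)
  let ?S = "solutions A (column j A)" and ?S' = "solutions (replace_col A j c') (column j A)"
  define e :: "nat^'n" where "e = axis j 1"
  assume "\<not> ?thesis"
  then have zero: "x $ j = 0" if "x \<in> ?S'" for x
    using that by blast
  have "?S' \<subseteq> ?S - {e}"
  proof
    fix x assume x: "x \<in> ?S'"
    then have "int_vec x $ j = 0" using zero by simp
    then have "x \<in> ?S"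
      using x by (simp add: solutions_def matrix_vector_mult_replace_col)
    moreover have "x \<noteq> e"
      using zero[OF x] by (auto simp: e_def axis_def vec_eq_iff)
    ultimately show "x \<in> ?S - {e}" by blast
  qed
  moreover have "e \<in> ?S"
  proof -
    have "(\<chi> k. if k = j then 0 else int_vec e $ k) = 0" "int_vec e $ j = 1"
      by (simp_all add: e_def axis_def vec_eq_iff)
    then show ?thesis
      using matrix_vector_mult_split_column[of A "int_vec e" j] by (simp add: solutions_def)
  qed
  ultimately have "?S' \<subset> ?S" by blast
  then have "finite ?S'" "card ?S' < card ?S"
    using fin by (auto intro: psubset_card_mono rev_finite_subset)
  with le fin show False by (simp add: vpf_solutions)
qed

lemma inj_map_solutions_replace_col:
  fixes A :: "int^'n^'d"
  assumes x0: "x0 \<in> solutions (replace_col A j c') (column j A)" and "x0 $ j \<noteq> 0"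
  defines "subst \<equiv> \<lambda>x. (\<chi> i. if i = j then 0 else x $ i) + x $ j *s x0"
  shows "inj subst" and "subst ` solutions A b \<subseteq> solutions (replace_col A j c') b"
proof -
  show "inj subst"
  proof (rule injI)
    fix x y assume eq: "subst x = subst y"
    have "subst z $ j = z $ j * x0 $ j" for z
      by (simp add: subst_def vector_scalar_mult_def)
    with eq \<open>x0 $ j \<noteq> 0\<close> have xj: "x $ j = y $ j" by (metis mult_right_cancel)
    show "x = y"
      unfolding vec_eq_iff
    proof
      fix i
      show "x $ i = y $ i"
        using xj arg_cong[OF eq, of "\<lambda>v. v $ i"]
        by (cases "i = j") (auto simp: subst_def vector_scalar_mult_def)
    qed
  qed
  show "subst ` solutions A b \<subseteq> solutions (replace_col A j c') b"
  proof
    fix y assume "y \<in> subst ` solutions A b"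
    then obtain x where x: "A *v int_vec x = b" and y: "y = subst x"
      by (auto simp: solutions_def)
    define x' :: "int^'n" where "x' = (\<chi> k. if k = j then 0 else int_vec x $ k)"
    have "int_vec y = x' + int (x $ j) *s int_vec x0"
      by (simp add: y subst_def int_vec_add int_vec_scalar_mult x'_def vec_eq_iff)
    then have "replace_col A j c' *v int_vec y
        = A *v x' + int (x $ j) *s column j A"
      using x0 by (simp add: matrix_vector_right_distrib matrix_vector_mult_scalar_commute
          matrix_vector_mult_replace_col x'_def solutions_def)
    also have "\<dots> = b"
      using x matrix_vector_mult_split_column[of A "int_vec x" j] by (simp add: x'_def)
    finally show "y \<in> solutions (replace_col A j c') b"
      by (simp add: solutions_def)
  qed
qed

theorem mainTheorem16:
  fixes A :: "int^'n^'d" and j :: 'n and c' :: "int^'d"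
  assumes ker: "\<forall>x :: real^'n. (\<forall>k. x $ k \<ge> 0) \<and> (map_matrix real_of_int A) *v x = 0 \<longrightarrow> x = 0"
    and le: "vpf (replace_col A j c') (column j A) \<ge> vpf A (column j A)"
  shows "\<forall>b :: int^'d. (\<forall>i. b $ i \<ge> 0) \<longrightarrow> vpf (replace_col A j c') b \<ge> vpf A b"
proof (intro allI impI)
  fix b :: "int^'d"
  obtain x0 where "x0 \<in> solutions (replace_col A j c') (column j A)" "x0 $ j \<noteq> 0"
    using ex_solution_using_replaced_column[OF finite_solutions[OF ker] le] by blast
  from inj_map_solutions_replace_col[OF this]
  show "vpf A b \<le> vpf (replace_col A j c') b"
    by (blast intro: vpf_le_by_injection finite_solutions[OF ker] inj_on_subset)
qed

end
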